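(* Let $\Delta$ be a finite $4$-valent graph, let $\mathcal{C}$ be a partition of $E\Delta$ into cycles, and let $G\le\mathrm{Aut}(\Delta)$ be arc-transitive and $\mathcal{C}$-invariant, so that $G\le\mathrm{Aut}(\mathrm{s}(\Delta,\mathcal{C}))$ via $(\alpha,C)^g=(\alpha^g,C^g)$. Suppose that $G\le A\le\mathrm{Aut}(\mathrm{s}(\Delta,\mathcal{C}))$, that $A$ is vertex-transitive on $\mathrm{s}(\Delta,\mathcal{C})$, and that for every vertex $v$ of $\mathrm{s}(\Delta,\mathcal{C})$ the group induced by $A_v$ on the neighbourhood of $v$ is cyclic of order $2$. Then $A\le\mathrm{Aut}(\Delta)$; that is, $A$ preserves the set of pairs $\{(\alpha,C),(\alpha,D)\}$ ($\alpha\in V\Delta$, $C\neq D$ the two cycles of $\mathcal{C}$ through $\alpha$), and under the identification of such a pair with $\alpha$, $A$ acts faithfully on $V\Delta$ as a group of automorphisms of $\Delta$.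
   Context: Splitting: for a $4$-valent graph $\Delta$ and a partition $\mathcal{C}$ of $E\Delta$ into cycles (each vertex lies on exactly two cycles of $\mathcal{C}$), $\mathrm{s}(\Delta,\mathcal{C})$ is the cubic graph with vertex set $\{(\alpha,C)\in V\Delta\times\mathcal{C} : \alpha\in VC\}$, where $(\alpha,C)$ and $(\beta,D)$ are adjacent iff either $C\ne D$ and $\alpha=\beta$, or $C=D$ and $\alpha,\beta$ are adjacent in $\Delta$. $G$ is $\mathcal{C}$-invariant if it permutes the cycles of $\mathcal{C}$. $A_v$ denotes the stabilizer of $v$ in $A$. *)

theory Defs
  imports "HOL-Combinatorics.Permutations"
begin

definition simple_graph :: "'a set \<Rightarrow> 'a set set \<Rightarrow> bool" where
  "simple_graph V Ed \<longleftrightarrow> finite V \<and> (\<forall>e\<in>Ed. e \<subseteq> V \<and> card e = 2)"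

definition nbhd :: "'a set \<Rightarrow> 'a set set \<Rightarrow> 'a \<Rightarrow> 'a set" where
  "nbhd V Ed x = {y\<in>V. {x, y} \<in> Ed}"

definition four_valent :: "'a set \<Rightarrow> 'a set set \<Rightarrow> bool" where
  "four_valent V Ed \<longleftrightarrow> (\<forall>x\<in>V. card (nbhd V Ed x) = 4)"

text \<open>A cycle, viewed as a set of edges: a nonempty finite connected 2-regular
  edge set (in a simple graph it automatically has length at least 3).\<close>

definition is_cycle :: "'a set set \<Rightarrow> bool" where
  "is_cycle C \<longleftrightarrow> C \<noteq> {} \<and> finite C \<and> (\<forall>e\<in>C. card e = 2) \<and>
     (\<forall>x\<in>\<Union>C. card {e\<in>C. x \<in> e} = 2) \<and>
     (\<forall>x\<in>\<Union>C. \<forall>y\<in>\<Union>C. (x, y) \<in> {(u, v). {u, v} \<in> C}\<^sup>*)"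

definition cycle_partition :: "'a set \<Rightarrow> 'a set set \<Rightarrow> 'a set set set \<Rightarrow> bool" where
  "cycle_partition V Ed \<C> \<longleftrightarrow> (\<forall>C\<in>\<C>. is_cycle C \<and> C \<subseteq> Ed) \<and> \<Union>\<C> = Ed \<and>
     (\<forall>C\<in>\<C>. \<forall>D\<in>\<C>. C \<noteq> D \<longrightarrow> C \<inter> D = {}) \<and>
     (\<forall>\<alpha>\<in>V. card {C\<in>\<C>. \<alpha> \<in> \<Union>C} = 2)"

definition graph_aut :: "'a set \<Rightarrow> 'a set set \<Rightarrow> ('a \<Rightarrow> 'a) set" where
  "graph_aut V Ed = {f. f permutes V \<and> (\<forall>x\<in>V. \<forall>y\<in>V. {x, y} \<in> Ed \<longleftrightarrow> {f x, f y} \<in> Ed)}"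

definition perm_group :: "'a set \<Rightarrow> ('a \<Rightarrow> 'a) set \<Rightarrow> bool" where
  "perm_group S A \<longleftrightarrow> (\<forall>f\<in>A. f permutes S) \<and> id \<in> A \<and>
     (\<forall>f\<in>A. \<forall>g\<in>A. f \<circ> g \<in> A) \<and> (\<forall>f\<in>A. inv f \<in> A)"

definition arc_transitive :: "'a set \<Rightarrow> 'a set set \<Rightarrow> ('a \<Rightarrow> 'a) set \<Rightarrow> bool" where
  "arc_transitive V Ed G \<longleftrightarrow> (\<forall>x\<in>V. \<forall>y\<in>V. \<forall>u\<in>V. \<forall>v\<in>V.
     {x, y} \<in> Ed \<longrightarrow> {u, v} \<in> Ed \<longrightarrow> (\<exists>g\<in>G. g x = u \<and> g y = v))"

definition cycle_invariant :: "'a set set set \<Rightarrow> ('a \<Rightarrow> 'a) set \<Rightarrow> bool" where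
  "cycle_invariant \<C> G \<longleftrightarrow> (\<forall>g\<in>G. \<forall>C\<in>\<C>. (\<lambda>e. g ` e) ` C \<in> \<C>)"

definition split_verts :: "'a set set set \<Rightarrow> ('a \<times> 'a set set) set" where
  "split_verts \<C> = {(\<alpha>, C). C \<in> \<C> \<and> \<alpha> \<in> \<Union>C}"

definition split_adj :: "('a \<times> 'a set set) \<Rightarrow> ('a \<times> 'a set set) \<Rightarrow> bool" where
  "split_adj v w \<longleftrightarrow> (snd v \<noteq> snd w \<and> fst v = fst w) \<or>
                     (snd v = snd w \<and> {fst v, fst w} \<in> snd v)"

definition split_nbhd :: "'a set set set \<Rightarrow> ('a \<times> 'a set set) \<Rightarrow> ('a \<times> 'a set set) set" where
  "split_nbhd \<C> v = {w\<in>split_verts \<C>. split_adj v w}"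

definition split_aut :: "'a set set set \<Rightarrow> (('a \<times> 'a set set) \<Rightarrow> ('a \<times> 'a set set)) set" where
  "split_aut \<C> = {f. f permutes split_verts \<C> \<and>
     (\<forall>v\<in>split_verts \<C>. \<forall>w\<in>split_verts \<C>. split_adj v w \<longleftrightarrow> split_adj (f v) (f w))}"

definition split_lift :: "'a set set set \<Rightarrow> ('a \<Rightarrow> 'a) \<Rightarrow> ('a \<times> 'a set set) \<Rightarrow> ('a \<times> 'a set set)" where
  "split_lift \<C> g x = (if x \<in> split_verts \<C> then (g (fst x), (\<lambda>e. g ` e) ` snd x) else x)"

definition local_group :: "'a set set set \<Rightarrow> (('a \<times> 'a set set) \<Rightarrow> ('a \<times> 'a set set)) set
     \<Rightarrow> ('a \<times> 'a set set) \<Rightarrow> (('a \<times> 'a set set) \<Rightarrow> ('a \<times> 'a set set)) set" where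
  "local_group \<C> A v = (\<lambda>a. restrict a (split_nbhd \<C> v)) ` {a\<in>A. a v = v}"

end

theory Submission
  imports Defs
begin

(* Call the edges {(alpha, C), (alpha, D)} of the splitting spokes. Lifting an element of
   G_alpha that maps one C-neighbour x of alpha to the other one, y, gives an element of A_(alpha, C)
   that fixes (alpha, D) but moves (x, C); as the local group has order 2, every element of
   A_(alpha, C) therefore fixes (alpha, D). Hence A maps spokes to spokes: if a sent the spoke at
   alpha onto a cycle edge {(beta, C'), (x, C')}, conjugating by a a lift that fixes (beta, C') but
   moves (x, C') would give an element of A_(alpha, C) moving (alpha, D).
   So A acts on the spokes, i.e. on V Delta, and maps cycle edges to cycle edges, hence edges of
   Delta to edges of Delta. The action is faithful because (alpha, C) is determined by alpha together
   with any edge of C at alpha. *)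

lemma card_2_cases: "card S = 2 \<Longrightarrow> x \<in> S \<Longrightarrow> y \<in> S \<Longrightarrow> x \<noteq> y \<Longrightarrow> z \<in> S \<Longrightarrow> z = x \<or> z = y"
  by (auto simp: card_2_iff)

lemma card_2_obtain_other:
  assumes "card e = 2" and "x \<in> e"
  obtains y where "y \<noteq> x" and "e = {x, y}"
proof -
  obtain a b where ab: "e = {a, b}" "a \<noteq> b" using assms(1) by (meson card_2_iff)
  show ?thesis
  proof (cases "x = a")
    case True
    then show ?thesis using that[of b] ab by simp
  next
    case False
    then have "x = b" using assms(2) ab by simp
    then show ?thesis using that[of a] ab by (simp add: insert_commute)
  qed
qed

lemma is_cycle_edge_card:
  assumes "is_cycle C" and "e \<in> C"
  shows "card e = 2"
proof -
  have "\<forall>e\<in>C. card e = 2" using assms(1) unfolding is_cycle_def by (elim conjE)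
  then show ?thesis using assms(2) ..
qed

lemma is_cycle_degree:
  assumes "is_cycle C" and "x \<in> \<Union>C"
  shows "card {e \<in> C. x \<in> e} = 2"
proof -
  have "\<forall>x\<in>\<Union>C. card {e \<in> C. x \<in> e} = 2" using assms(1) unfolding is_cycle_def by (elim conjE)
  then show ?thesis using assms(2) ..
qed

lemma is_cycle_neighbour:
  assumes "is_cycle C" and "x \<in> \<Union>C"
  obtains y where "{x, y} \<in> C"
proof -
  obtain e where e: "e \<in> C" "x \<in> e" using assms(2) by blast
  have "card e = 2" using is_cycle_edge_card[OF assms(1) e(1)] .
  then obtain y where "y \<noteq> x" "e = {x, y}" using e(2) by (rule card_2_obtain_other)
  then show ?thesis using that e(1) by simp
qed

lemma is_cycle_other_neighbour:
  assumes "is_cycle C" and "{x, y} \<in> C"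
  obtains z where "z \<noteq> y" and "{x, z} \<in> C"
proof -
  have "card {e \<in> C. x \<in> e} = 2" using is_cycle_degree[OF assms(1)] assms(2) by blast
  then obtain e where e: "e \<in> C" "x \<in> e" "e \<noteq> {x, y}"
    by (metis (no_types, lifting) card_2_iff insertCI mem_Collect_eq)
  have "card e = 2" using is_cycle_edge_card[OF assms(1) e(1)] .
  then obtain z where "z \<noteq> x" and z: "e = {x, z}" using e(2) by (rule card_2_obtain_other)
  have "z \<noteq> y" using e(3) z by blast
  moreover have "{x, z} \<in> C" using e(1) z by simp
  ultimately show ?thesis by (rule that)
qed

lemma is_cycle_edge_distinct: "is_cycle C \<Longrightarrow> {x, y} \<in> C \<Longrightarrow> x \<noteq> y"
  using is_cycle_edge_card by fastforce

lemma perm_group_permutes: "perm_group S A \<Longrightarrow> a \<in> A \<Longrightarrow> a permutes S"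
  by (simp add: perm_group_def)

lemma perm_group_id: "perm_group S A \<Longrightarrow> id \<in> A"
  by (simp add: perm_group_def)

lemma perm_group_comp: "perm_group S A \<Longrightarrow> a \<in> A \<Longrightarrow> b \<in> A \<Longrightarrow> a \<circ> b \<in> A"
  by (simp add: perm_group_def)

lemma perm_group_inv: "perm_group S A \<Longrightarrow> a \<in> A \<Longrightarrow> inv a \<in> A"
  by (simp add: perm_group_def)

lemma split_verts_iff [simp]: "(\<alpha>, C) \<in> split_verts \<C> \<longleftrightarrow> C \<in> \<C> \<and> \<alpha> \<in> \<Union>C"
  by (simp add: split_verts_def)

lemma split_adj_spoke: "C \<noteq> D \<Longrightarrow> split_adj (\<alpha>, C) (\<alpha>, D)"
  by (simp add: split_adj_def)

lemma split_adj_cycle_edge: "{x, y} \<in> C \<Longrightarrow> split_adj (x, C) (y, C)"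
  by (simp add: split_adj_def)

lemma split_adj_distinct_fst: "split_adj (x, C) (y, D) \<Longrightarrow> x \<noteq> y \<Longrightarrow> D = C \<and> {x, y} \<in> C"
  by (auto simp: split_adj_def)

lemma split_aut_adj:
  "f \<in> split_aut \<C> \<Longrightarrow> v \<in> split_verts \<C> \<Longrightarrow> w \<in> split_verts \<C> \<Longrightarrow> split_adj v w \<Longrightarrow>
    split_adj (f v) (f w)"
  by (simp add: split_aut_def)

lemma split_lift_apply: "(\<alpha>, D) \<in> split_verts \<C> \<Longrightarrow> split_lift \<C> g (\<alpha>, D) = (g \<alpha>, image g ` D)"
  by (simp add: split_lift_def)

lemma local_group_card_2_fixes:
  assumes "card (local_group \<C> A v) = 2" and "id \<in> A"
    and "b\<^sub>1 \<in> A" "b\<^sub>1 v = v" and "w \<in> split_nbhd \<C> v" "b\<^sub>1 w \<noteq> w"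
    and "u \<in> split_nbhd \<C> v" "b\<^sub>1 u = u"
    and "b \<in> A" "b v = v"
  shows "b u = u"
proof -
  let ?N = "split_nbhd \<C> v"
  have members: "restrict id ?N \<in> local_group \<C> A v" "restrict b\<^sub>1 ?N \<in> local_group \<C> A v"
      "restrict b ?N \<in> local_group \<C> A v"
    using assms unfolding local_group_def by auto
  have "restrict id ?N \<noteq> restrict b\<^sub>1 ?N"
  proof
    assume "restrict id ?N = restrict b\<^sub>1 ?N"
    then have "restrict id ?N w = restrict b\<^sub>1 ?N w" by simp
    then show False using assms(5,6) by simp
  qed
  then have "restrict b ?N = restrict id ?N \<or> restrict b ?N = restrict b\<^sub>1 ?N"
    using card_2_cases[OF assms(1)] members by blast
  then show ?thesis
  proof
    assume "restrict b ?N = restrict id ?N"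
    then have "restrict b ?N u = restrict id ?N u" by simp
    then show ?thesis using assms(7) by simp
  next
    assume "restrict b ?N = restrict b\<^sub>1 ?N"
    then have "restrict b ?N u = restrict b\<^sub>1 ?N u" by simp
    then show ?thesis using assms(7,8) by simp
  qed
qed

locale cycle_decomposition =
  fixes V :: "'a set" and Ed :: "'a set set" and \<C> :: "'a set set set"
  assumes simple_graph: "simple_graph V Ed"
    and cycle_partition: "cycle_partition V Ed \<C>"
begin

lemma cycle_is_cycle: "C \<in> \<C> \<Longrightarrow> is_cycle C"
  using cycle_partition by (simp add: cycle_partition_def)

lemma edges_eq_Union: "Ed = \<Union>\<C>"
  using cycle_partition by (simp add: cycle_partition_def)

lemma cycle_unique: "C \<in> \<C> \<Longrightarrow> D \<in> \<C> \<Longrightarrow> e \<in> C \<Longrightarrow> e \<in> D \<Longrightarrow> C = D"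
  using cycle_partition unfolding cycle_partition_def by blast

lemma card_cycles_through: "\<alpha> \<in> V \<Longrightarrow> card {C \<in> \<C>. \<alpha> \<in> \<Union>C} = 2"
  using cycle_partition by (simp add: cycle_partition_def)

lemma edge_subset_V: "e \<in> Ed \<Longrightarrow> e \<subseteq> V"
  using simple_graph by (simp add: simple_graph_def)

lemma cycle_edge_in_V: "C \<in> \<C> \<Longrightarrow> {x, y} \<in> C \<Longrightarrow> x \<in> V \<and> y \<in> V"
  using edge_subset_V edges_eq_Union by blast

lemma split_verts_fst_in_V: "(\<alpha>, C) \<in> split_verts \<C> \<Longrightarrow> \<alpha> \<in> V"
  using edge_subset_V edges_eq_Union by auto

lemma split_verts_over_vertex:
  assumes "\<alpha> \<in> V"
  obtains C where "(\<alpha>, C) \<in> split_verts \<C>"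
proof -
  have "{C \<in> \<C>. \<alpha> \<in> \<Union>C} \<noteq> {}"
    using card_cycles_through[OF assms] by (metis card.empty zero_neq_numeral)
  then show ?thesis using that by auto
qed

lemma cycles_through_vertex:
  assumes "(\<alpha>, C) \<in> split_verts \<C>" "(\<alpha>, D) \<in> split_verts \<C>" "C \<noteq> D" "(\<alpha>, E) \<in> split_verts \<C>"
  shows "E = C \<or> E = D"
  using card_2_cases[OF card_cycles_through[OF split_verts_fst_in_V[OF assms(1)]]] assms by auto

end

locale split_group = cycle_decomposition +
  fixes A :: "(('a \<times> 'a set set) \<Rightarrow> ('a \<times> 'a set set)) set"
  assumes perm_group: "perm_group (split_verts \<C>) A"
    and A_split_aut: "A \<subseteq> split_aut \<C>"
begin

lemma A_permutes: "a \<in> A \<Longrightarrow> a permutes split_verts \<C>"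
  using perm_group by (rule perm_group_permutes)

lemma A_in: "a \<in> A \<Longrightarrow> v \<in> split_verts \<C> \<Longrightarrow> a v \<in> split_verts \<C>"
  by (simp add: A_permutes permutes_in_image)

lemma A_adj: "a \<in> A \<Longrightarrow> v \<in> split_verts \<C> \<Longrightarrow> w \<in> split_verts \<C> \<Longrightarrow> split_adj v w \<Longrightarrow>
    split_adj (a v) (a w)"
  by (rule split_aut_adj[OF subsetD[OF A_split_aut]])

end

definition preserves_spokes :: "'a set set set \<Rightarrow> (('a \<times> 'a set set) \<Rightarrow> ('a \<times> 'a set set)) \<Rightarrow> bool"
  where "preserves_spokes \<C> a \<longleftrightarrow> (\<forall>\<alpha> C D. (\<alpha>, C) \<in> split_verts \<C> \<longrightarrow> (\<alpha>, D) \<in> split_verts \<C> \<longrightarrow>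
    fst (a (\<alpha>, C)) = fst (a (\<alpha>, D)))"

(* The action on V Delta obtained by identifying a spoke with its vertex alpha; for a spoke-preserving a
   the choice of the cycle through alpha is irrelevant. *)
definition induced_map ::
    "'a set \<Rightarrow> 'a set set set \<Rightarrow> (('a \<times> 'a set set) \<Rightarrow> ('a \<times> 'a set set)) \<Rightarrow> 'a \<Rightarrow> 'a"
  where "induced_map V \<C> a \<alpha> = (if \<alpha> \<in> V then fst (a (\<alpha>, SOME C. (\<alpha>, C) \<in> split_verts \<C>)) else \<alpha>)"

locale spoke_preserving_group = split_group +
  assumes spoke_preserving: "a \<in> A \<Longrightarrow> preserves_spokes \<C> a"
begin

abbreviation \<phi> where "\<phi> \<equiv> induced_map V \<C>"

lemma fst_apply_eq_induced_map:
  assumes a: "a \<in> A" and x: "x \<in> split_verts \<C>"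
  shows "fst (a x) = \<phi> a (fst x)"
proof -
  obtain \<alpha> C where x_eq: "x = (\<alpha>, C)" by (cases x)
  then have "\<exists>C. (\<alpha>, C) \<in> split_verts \<C>" using x by blast
  then have "(\<alpha>, SOME C. (\<alpha>, C) \<in> split_verts \<C>) \<in> split_verts \<C>" by (rule someI_ex)
  then have "fst (a (\<alpha>, C)) = fst (a (\<alpha>, SOME C. (\<alpha>, C) \<in> split_verts \<C>))"
    using spoke_preserving[OF a] x x_eq unfolding preserves_spokes_def by blast
  moreover have "\<alpha> \<in> V" using split_verts_fst_in_V x x_eq by simp
  ultimately show ?thesis using x_eq by (simp add: induced_map_def)
qed

lemma induced_map_in_V:
  assumes "a \<in> A" and "\<alpha> \<in> V"
  shows "\<phi> a \<alpha> \<in> V"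
proof -
  obtain C where v: "(\<alpha>, C) \<in> split_verts \<C>" using split_verts_over_vertex[OF assms(2)] .
  have "(fst (a (\<alpha>, C)), snd (a (\<alpha>, C))) \<in> split_verts \<C>" using A_in[OF assms(1) v] by simp
  then have "fst (a (\<alpha>, C)) \<in> V" by (rule split_verts_fst_in_V)
  then show ?thesis using fst_apply_eq_induced_map[OF assms(1) v] by simp
qed

lemma induced_map_inv_cancel: "a \<in> A \<Longrightarrow> \<alpha> \<in> V \<Longrightarrow> \<phi> (inv a) (\<phi> a \<alpha>) = \<alpha>"
proof -
  assume a: "a \<in> A" and "\<alpha> \<in> V"
  obtain C where v: "(\<alpha>, C) \<in> split_verts \<C>" using split_verts_over_vertex[OF \<open>\<alpha> \<in> V\<close>] .
  have "\<phi> (inv a) (\<phi> a \<alpha>) = \<phi> (inv a) (fst (a (\<alpha>, C)))" using fst_apply_eq_induced_map a v by simp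
  also have "\<dots> = fst (inv a (a (\<alpha>, C)))"
    using fst_apply_eq_induced_map A_in perm_group_inv[OF perm_group] a v by simp
  also have "\<dots> = \<alpha>" using permutes_inverses(2)[OF A_permutes[OF a]] by simp
  finally show ?thesis .
qed

lemma induced_map_permutes: "a \<in> A \<Longrightarrow> \<phi> a permutes V"
proof -
  assume a: "a \<in> A"
  have inv_a: "inv a \<in> A" using perm_group_inv[OF perm_group a] .
  have "inv (inv a) = a" using A_permutes[OF a] by (simp add: inv_inv_eq permutes_bij)
  then have right_inv: "\<phi> a (\<phi> (inv a) \<alpha>) = \<alpha>" if "\<alpha> \<in> V" for \<alpha>
    using induced_map_inv_cancel[OF inv_a that] by simp
  have "bij_betw (\<phi> a) V V"
  proof (rule bij_betw_byWitness[where f' = "\<phi> (inv a)"])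
    show "\<forall>\<alpha>\<in>V. \<phi> (inv a) (\<phi> a \<alpha>) = \<alpha>" using induced_map_inv_cancel[OF a] by blast
    show "\<forall>\<alpha>\<in>V. \<phi> a (\<phi> (inv a) \<alpha>) = \<alpha>" using right_inv by blast
    show "\<phi> a ` V \<subseteq> V" using induced_map_in_V[OF a] by blast
    show "\<phi> (inv a) ` V \<subseteq> V" using induced_map_in_V[OF inv_a] by blast
  qed
  moreover have "\<phi> a \<alpha> = \<alpha>" if "\<alpha> \<notin> V" for \<alpha> using that by (simp add: induced_map_def)
  ultimately show ?thesis by (rule bij_imp_permutes)
qed

lemma cycle_edge_image:
  assumes a: "a \<in> A" and C: "C \<in> \<C>" and xy: "{x, y} \<in> C"
  obtains C' where "C' \<in> \<C>" "a (x, C) = (\<phi> a x, C')" "a (y, C) = (\<phi> a y, C')" "{\<phi> a x, \<phi> a y} \<in> C'"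
proof -
  have v: "(x, C) \<in> split_verts \<C>" "(y, C) \<in> split_verts \<C>" using C xy by auto
  define C' where "C' = snd (a (x, C))"
  define D' where "D' = snd (a (y, C))"
  have ax: "a (x, C) = (\<phi> a x, C')" and ay: "a (y, C) = (\<phi> a y, D')"
    using fst_apply_eq_induced_map[OF a v(1)] fst_apply_eq_induced_map[OF a v(2)]
    by (simp_all add: prod_eq_iff C'_def D'_def)
  have "split_adj (\<phi> a x, C') (\<phi> a y, D')"
    using A_adj[OF a v split_adj_cycle_edge[OF xy]] ax ay by simp
  moreover have "\<phi> a x \<noteq> \<phi> a y"
  proof
    assume "\<phi> a x = \<phi> a y"
    then have "\<phi> (inv a) (\<phi> a x) = \<phi> (inv a) (\<phi> a y)" by simp
    then show False
      using induced_map_inv_cancel[OF a] cycle_edge_in_V[OF C xy]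
        is_cycle_edge_distinct[OF cycle_is_cycle[OF C] xy] by simp
  qed
  ultimately have "D' = C' \<and> {\<phi> a x, \<phi> a y} \<in> C'" by (rule split_adj_distinct_fst)
  then have ay': "a (y, C) = (\<phi> a y, C')" and edge: "{\<phi> a x, \<phi> a y} \<in> C'"
    using ay by simp_all
  have "C' \<in> \<C>" using A_in[OF a v(1)] ax by simp
  from this ax ay' edge show ?thesis by (rule that)
qed

lemma induced_map_graph_aut: "a \<in> A \<Longrightarrow> \<phi> a \<in> graph_aut V Ed"
proof -
  assume a: "a \<in> A"
  have edge: "{\<phi> b x, \<phi> b y} \<in> Ed" if b: "b \<in> A" and xy: "{x, y} \<in> Ed" for b x y
  proof -
    obtain C where "C \<in> \<C>" "{x, y} \<in> C" using xy edges_eq_Union by auto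
    then obtain C' where "C' \<in> \<C>" "{\<phi> b x, \<phi> b y} \<in> C'" by (rule cycle_edge_image[OF b])
    then show ?thesis using edges_eq_Union by blast
  qed
  have "{x, y} \<in> Ed" if "x \<in> V" "y \<in> V" "{\<phi> a x, \<phi> a y} \<in> Ed" for x y
    using edge[OF perm_group_inv[OF perm_group a] that(3)] induced_map_inv_cancel a that(1,2) by simp
  then show ?thesis
    using edge a induced_map_permutes unfolding graph_aut_def by blast
qed

lemma inj_on_induced_map: "inj_on \<phi> A"
proof (rule inj_onI)
  fix a b assume a: "a \<in> A" and b: "b \<in> A" and eq: "\<phi> a = \<phi> b"
  have agree: "a v = b v" if v: "v \<in> split_verts \<C>" for v
  proof -
    obtain \<alpha> C where v_eq: "v = (\<alpha>, C)" by (cases v)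
    then have C: "C \<in> \<C>" "\<alpha> \<in> \<Union>C" using v by simp_all
    obtain \<beta> where \<beta>: "{\<alpha>, \<beta>} \<in> C" using is_cycle_neighbour[OF cycle_is_cycle[OF C(1)] C(2)] .
    obtain C' where "C' \<in> \<C>" "a (\<alpha>, C) = (\<phi> a \<alpha>, C')" "{\<phi> a \<alpha>, \<phi> a \<beta>} \<in> C'"
      using cycle_edge_image[OF a C(1) \<beta>] by metis
    moreover obtain D' where "D' \<in> \<C>" "b (\<alpha>, C) = (\<phi> a \<alpha>, D')" "{\<phi> a \<alpha>, \<phi> a \<beta>} \<in> D'"
      using cycle_edge_image[OF b C(1) \<beta>] eq by metis
    ultimately show ?thesis using cycle_unique v_eq by metis
  qed
  show "a = b"
  proof
    fix v
    show "a v = b v"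
      using agree[of v] permutes_not_in[OF A_permutes[OF a], of v]
        permutes_not_in[OF A_permutes[OF b], of v]
      by (cases "v \<in> split_verts \<C>") simp_all
  qed
qed

end

locale split_action = split_group +
  fixes G :: "('a \<Rightarrow> 'a) set"
  assumes G_graph_aut: "G \<subseteq> graph_aut V Ed"
    and G_arc_transitive: "arc_transitive V Ed G"
    and G_cycle_invariant: "cycle_invariant \<C> G"
    and lift_in_A: "g \<in> G \<Longrightarrow> split_lift \<C> g \<in> A"
    and card_local_group: "v \<in> split_verts \<C> \<Longrightarrow> card (local_group \<C> A v) = 2"
begin

lemma G_inj: "g \<in> G \<Longrightarrow> inj g"
  using G_graph_aut permutes_inj unfolding graph_aut_def by blast

lemma cycle_image_in: "g \<in> G \<Longrightarrow> C \<in> \<C> \<Longrightarrow> image g ` C \<in> \<C>"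
  using G_cycle_invariant unfolding cycle_invariant_def by blast

lemma cycle_image_fixed: "g \<in> G \<Longrightarrow> C \<in> \<C> \<Longrightarrow> e \<in> C \<Longrightarrow> g ` e \<in> C \<Longrightarrow> image g ` C = C"
  using cycle_image_in cycle_unique by blast

lemma vertex_stabiliser_fixes_cycles:
  assumes g: "g \<in> G" "g \<alpha> = \<alpha>" and C: "(\<alpha>, C) \<in> split_verts \<C>" "image g ` C = C"
    and D: "(\<alpha>, D) \<in> split_verts \<C>"
  shows "image g ` D = D"
proof (cases "C = D")
  case False
  obtain e where "e \<in> D" "\<alpha> \<in> e" using D by auto
  then have "\<alpha> \<in> \<Union>(image g ` D)" using g(2) by (metis UnionI image_eqI)
  then have "image g ` D = C \<or> image g ` D = D"
    using cycles_through_vertex[OF C(1) D False] cycle_image_in g(1) D by simp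
  moreover have "inj (image (image g))" using G_inj[OF g(1)] by (simp add: inj_def inj_image_eq_iff)
  ultimately show ?thesis using C(2) False by (metis injD)
qed (use C in simp)

lemma lift_rotating_at_vertex:
  assumes C: "C \<in> \<C>" and x: "{\<alpha>, x} \<in> C" and y: "{\<alpha>, y} \<in> C"
  obtains b where "b \<in> A" "b (x, C) = (y, C)" "\<And>D. (\<alpha>, D) \<in> split_verts \<C> \<Longrightarrow> b (\<alpha>, D) = (\<alpha>, D)"
proof -
  have "\<alpha> \<in> V" "x \<in> V" "y \<in> V" "{\<alpha>, x} \<in> Ed" "{\<alpha>, y} \<in> Ed"
    using cycle_edge_in_V[OF C] x y C edges_eq_Union by blast+
  then obtain g where g: "g \<in> G" "g \<alpha> = \<alpha>" "g x = y"
    using G_arc_transitive unfolding arc_transitive_def by metis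
  have gC: "image g ` C = C" using cycle_image_fixed[OF g(1) C x] g y by simp
  show ?thesis
  proof (rule that[of "split_lift \<C> g"])
    show "split_lift \<C> g \<in> A" using lift_in_A[OF g(1)] .
    have "(x, C) \<in> split_verts \<C>" using C x by auto
    then show "split_lift \<C> g (x, C) = (y, C)" using g gC by (simp add: split_lift_apply)
    show "split_lift \<C> g (\<alpha>, D) = (\<alpha>, D)" if "(\<alpha>, D) \<in> split_verts \<C>" for D
      using split_lift_apply[OF that] vertex_stabiliser_fixes_cycles[OF g(1,2) _ gC that] C x g
      by auto
  qed
qed

lemma stabiliser_fixes_spoke:
  assumes b: "b \<in> A" "b (\<alpha>, C) = (\<alpha>, C)"
    and C: "(\<alpha>, C) \<in> split_verts \<C>" and D: "(\<alpha>, D) \<in> split_verts \<C>"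
  shows "b (\<alpha>, D) = (\<alpha>, D)"
proof (cases "C = D")
  case False
  have C_cycle: "C \<in> \<C>" and "\<alpha> \<in> \<Union>C" using C by simp_all
  have cyc: "is_cycle C" using cycle_is_cycle[OF C_cycle] .
  obtain x where x: "{\<alpha>, x} \<in> C" using is_cycle_neighbour[OF cyc \<open>\<alpha> \<in> \<Union>C\<close>] .
  obtain y where y: "y \<noteq> x" "{\<alpha>, y} \<in> C" using is_cycle_other_neighbour[OF cyc x] .
  obtain b\<^sub>1 where b\<^sub>1: "b\<^sub>1 \<in> A" "b\<^sub>1 (x, C) = (y, C)"
      "\<And>D. (\<alpha>, D) \<in> split_verts \<C> \<Longrightarrow> b\<^sub>1 (\<alpha>, D) = (\<alpha>, D)"
    using lift_rotating_at_vertex[OF C_cycle x y(2)] by blast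
  have x_nbr: "(x, C) \<in> split_nbhd \<C> (\<alpha>, C)"
    using C_cycle x split_adj_cycle_edge[OF x] unfolding split_nbhd_def by auto
  have D_nbr: "(\<alpha>, D) \<in> split_nbhd \<C> (\<alpha>, C)"
    using D split_adj_spoke[OF False] unfolding split_nbhd_def by simp
  show ?thesis
  proof (rule local_group_card_2_fixes[OF card_local_group[OF C] perm_group_id[OF perm_group]
        b\<^sub>1(1) _ x_nbr _ D_nbr _ b])
    show "b\<^sub>1 (\<alpha>, C) = (\<alpha>, C)" using b\<^sub>1(3)[OF C] .
    show "b\<^sub>1 (x, C) \<noteq> (x, C)" using b\<^sub>1(2) y(1) by simp
    show "b\<^sub>1 (\<alpha>, D) = (\<alpha>, D)" using b\<^sub>1(3)[OF D] .
  qed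
qed (use b in simp)

lemma A_preserves_spokes:
  assumes a: "a \<in> A"
  shows "preserves_spokes \<C> a"
  unfolding preserves_spokes_def
proof (intro allI impI)
  fix \<alpha> C D assume C: "(\<alpha>, C) \<in> split_verts \<C>" and D: "(\<alpha>, D) \<in> split_verts \<C>"
  obtain \<beta> C' where aC: "a (\<alpha>, C) = (\<beta>, C')" by (cases "a (\<alpha>, C)")
  obtain x Y where aD: "a (\<alpha>, D) = (x, Y)" by (cases "a (\<alpha>, D)")
  show "fst (a (\<alpha>, C)) = fst (a (\<alpha>, D))"
  proof (rule ccontr)
    assume "fst (a (\<alpha>, C)) \<noteq> fst (a (\<alpha>, D))"
    then have "\<beta> \<noteq> x" and "C \<noteq> D" using aC aD by auto
    have "split_adj (\<beta>, C') (x, Y)"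
      using A_adj[OF a C D split_adj_spoke[OF \<open>C \<noteq> D\<close>]] aC aD by simp
    then have "Y = C' \<and> {\<beta>, x} \<in> C'" using \<open>\<beta> \<noteq> x\<close> by (rule split_adj_distinct_fst)
    then have Y: "Y = C'" and \<beta>x: "{\<beta>, x} \<in> C'" by simp_all
    have \<beta>C': "(\<beta>, C') \<in> split_verts \<C>" using A_in[OF a C] aC by simp
    then have C'_cycle: "C' \<in> \<C>" by simp
    obtain y where "y \<noteq> x" "{\<beta>, y} \<in> C'"
      using is_cycle_other_neighbour[OF cycle_is_cycle[OF C'_cycle] \<beta>x] .
    then obtain b where b: "b \<in> A" "b (x, C') = (y, C')"
        "\<And>D. (\<beta>, D) \<in> split_verts \<C> \<Longrightarrow> b (\<beta>, D) = (\<beta>, D)"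
      using lift_rotating_at_vertex[OF C'_cycle \<beta>x] by blast
    define c where "c = inv a \<circ> b \<circ> a"
    have "inv a \<circ> b \<in> A" using perm_group_comp[OF perm_group perm_group_inv[OF perm_group a] b(1)] .
    then have "c \<in> A" unfolding c_def using perm_group_comp[OF perm_group _ a] by blast
    moreover have "c (\<alpha>, C) = (\<alpha>, C)"
      using permutes_inverses(2)[OF A_permutes[OF a], of "(\<alpha>, C)"] aC b(3)[OF \<beta>C']
      by (simp add: c_def)
    ultimately have "c (\<alpha>, D) = (\<alpha>, D)" using stabiliser_fixes_spoke C D by blast
    then have "a (c (\<alpha>, D)) = a (\<alpha>, D)" by simp
    then have "b (a (\<alpha>, D)) = a (\<alpha>, D)"
      using permutes_inverses(1)[OF A_permutes[OF a]] by (simp add: c_def)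
    then show False using aD Y b(2) \<open>y \<noteq> x\<close> by simp
  qed
qed

end

sublocale split_action \<subseteq> spoke_preserving_group
  by unfold_locales (fact A_preserves_spokes)

theorem corollary2p10:
  fixes V :: "'a set" and Ed :: "'a set set" and \<C> :: "'a set set set"
    and G :: "('a \<Rightarrow> 'a) set" and A :: "(('a \<times> 'a set set) \<Rightarrow> ('a \<times> 'a set set)) set"
  assumes "simple_graph V Ed" and "four_valent V Ed"
    and "cycle_partition V Ed \<C>"
    and "perm_group V G" and "G \<subseteq> graph_aut V Ed"
    and "arc_transitive V Ed G" and "cycle_invariant \<C> G"
    and "perm_group (split_verts \<C>) A" and "A \<subseteq> split_aut \<C>"
    and "\<forall>g\<in>G. split_lift \<C> g \<in> A"
    and "\<forall>v\<in>split_verts \<C>. \<forall>w\<in>split_verts \<C>. \<exists>a\<in>A. a v = w"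
    and "\<forall>v\<in>split_verts \<C>. card (local_group \<C> A v) = 2"
  shows "\<exists>\<phi>. (\<forall>a\<in>A. \<forall>x\<in>split_verts \<C>. fst (a x) = \<phi> a (fst x)) \<and>
             (\<forall>a\<in>A. \<phi> a \<in> graph_aut V Ed) \<and> inj_on \<phi> A"
proof -
  interpret split_action V Ed \<C> A G
    by unfold_locales (use assms in simp_all)
  show ?thesis using fst_apply_eq_induced_map induced_map_graph_aut inj_on_induced_map by blast
qed

end
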